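(* Let $G$ be a parallel-edge network with pairwise distinct lengths $l_1,\dots,l_m>0$, each $f_e$ a standard response function, and let $\mathbf{x}(t)$ solve $\dot x_e = x_e\left(f_e\!\left(\mathcal{E}/l_e\right)-1\right)$ ($e\in E$), $\mathcal{E}=\left(\sum_{e\in E}x_e/l_e\right)^{-1}$, with initial condition $\mathbf{x}(0)\in\mathbb{R}^E_{>0}$ (all coordinates strictly positive). Let $i^*$ be the edge of minimum length. Then, as $t\to\infty$, $\mathcal{E}(t)\to l_{i^*}$ and $\mathbf{x}(t)\to\boldsymbol{\chi}_{i^*}$, the $i^*$-th standard basis vector of $\mathbb{R}^E$.
   Context: A parallel-edge network is a multigraph with exactly two nodes $s_0,s_1$ and edge set $E=\{1,\dots,m\}$, each edge joining $s_0$ and $s_1$, with lengths $l_e>0$. A function $f:\mathbb{R}_{\ge0}\to\mathbb{R}_{\ge0}$ is a standard response function if $f(1)=1$, $f$ is strictly increasing on $\mathbb{R}_{>0}$, and $f$ is differentiable on $\mathbb{R}_{>0}$. (This system is the specialization to parallel-edge networks of the adaptation dynamics $\dot x_e = x_e(f_e(|q_e|/x_e)-1)$, where $\mathbf{q}$ is the unit-value minimum-energy $s_0$-$s_1$ flow with edge resistances $l_e/x_e$.) *)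

theory Defs
  imports "HOL-Analysis.Analysis"
begin

definition standard_response :: "(real \<Rightarrow> real) \<Rightarrow> bool" where
  "standard_response f \<longleftrightarrow>
     (\<forall>y\<ge>0. f y \<ge> 0) \<and> f 1 = 1 \<and>
     strict_mono_on {0<..} f \<and>
     (\<forall>y>0. f differentiable (at y))"

definition energy :: "('e::finite \<Rightarrow> real) \<Rightarrow> ('e \<Rightarrow> real) \<Rightarrow> real" where
  "energy l x = inverse (\<Sum>e\<in>UNIV. x e / l e)"

end

(*
  Comparison arguments give positivity of the conductivities and an a priori bound on the
  energy E. While E stays below some \<theta> < min l, every edge shrinks at a uniform rate, so the
  conductance 1/E decays exponentially; hence E eventually exceeds every such \<theta>. Fixing a
  threshold \<eta> between the two smallest lengths, the function
  \<alpha> * ln (conductance of the longer edges) - ln (x istar)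
  then decreases at a uniform rate for a suitable \<alpha> > 0: for E \<le> \<eta> the longer edges shrink,
  for E > \<eta> the shortest one grows. As x istar stays bounded, the longer edges vanish, after
  which x istar is driven to 1 and E to l istar.
*)

theory Submission
  imports Defs
begin

lemma DERIV_at_within_atLeast_imp_at:
  fixes u :: "real \<Rightarrow> real"
  assumes "t0 < t" "(u has_real_derivative D) (at t within {t0..})"
  shows "(u has_real_derivative D) (at t)"
  using assms at_within_interior[of t "{t0..}"] by simp

lemma continuous_on_if_DERIV_within_atLeast:
  fixes u :: "real \<Rightarrow> real"
  assumes "\<And>t. t \<ge> t0 \<Longrightarrow> (u has_real_derivative u' t) (at t within {t0..})" "t0 \<le> a"
  shows "continuous_on {a..b} u"
proof (rule DERIV_continuous_on)
  fix t assume "t \<in> {a..b}"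
  then show "(u has_real_derivative u' t) (at t within {a..b})"
    using assms by (intro has_field_derivative_subset[OF assms(1)]) auto
qed

lemma le_max_if_deriv_nonpos_above:
  fixes u u' :: "real \<Rightarrow> real"
  assumes deriv: "\<And>t. t \<ge> t0 \<Longrightarrow> (u has_real_derivative u' t) (at t within {t0..})"
    and nonpos: "\<And>t. t > t0 \<Longrightarrow> u t > K \<Longrightarrow> u' t \<le> 0"
    and "t1 \<ge> t0"
  shows "u t1 \<le> max (u t0) K"
proof (rule ccontr)
  assume above: "\<not> u t1 \<le> max (u t0) K"
  define Z where "Z = {s \<in> {t0..t1}. u s \<le> max (u t0) K}"
  have "closed Z" unfolding Z_def
    by (rule continuous_on_closed_Collect_le)
       (auto intro: continuous_on_if_DERIV_within_atLeast[OF deriv])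
  moreover have "t0 \<in> Z" using \<open>t1 \<ge> t0\<close> by (auto simp: Z_def)
  moreover have bdd: "bdd_above Z" unfolding Z_def by (auto intro: bdd_aboveI[of _ t1])
  ultimately have aZ: "Sup Z \<in> Z" using closed_contains_Sup by blast
  define a where "a = Sup Z"
  have "t0 \<le> a" "a \<le> t1" using aZ by (auto simp: Z_def a_def)
  have beyond: "u s > max (u t0) K" if "a < s" "s \<le> t1" for s
  proof (rule ccontr)
    assume "\<not> ?thesis"
    then have "s \<in> Z" using that \<open>t0 \<le> a\<close> by (auto simp: Z_def)
    then have "s \<le> a" using bdd unfolding a_def by (rule cSup_upper)
    then show False using that by simp
  qed
  have "u t1 \<le> u a"
  proof (rule DERIV_nonpos_imp_decreasing_open[OF \<open>a \<le> t1\<close>])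
    fix s assume s: "a < s" "s < t1"
    have "(u has_real_derivative u' s) (at s)"
      using s \<open>t0 \<le> a\<close> by (intro DERIV_at_within_atLeast_imp_at[OF _ deriv]) auto
    moreover have "u' s \<le> 0" using nonpos[of s] beyond[of s] s \<open>t0 \<le> a\<close> by auto
    ultimately show "\<exists>y. DERIV u s :> y \<and> y \<le> 0" by blast
  qed (rule continuous_on_if_DERIV_within_atLeast[OF deriv \<open>t0 \<le> a\<close>])
  then show False using aZ above by (auto simp: Z_def a_def)
qed

lemma eventually_le_if_deriv_le_neg_above:
  fixes u u' :: "real \<Rightarrow> real"
  assumes deriv: "\<And>t. t \<ge> t0 \<Longrightarrow> (u has_real_derivative u' t) (at t within {t0..})"
    and "c > 0"
    and decay: "\<And>t. t \<ge> t0 \<Longrightarrow> u t > K \<Longrightarrow> u' t \<le> -c"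
  shows "eventually (\<lambda>t. u t \<le> K) at_top"
proof -
  have "\<exists>t1\<ge>t0. u t1 \<le> K"
  proof (rule ccontr)
    assume "\<not> ?thesis"
    then have above: "\<And>t. t \<ge> t0 \<Longrightarrow> u t > K" by force
    define T where "T = t0 + \<bar>u t0 - K\<bar> / c + 1"
    have "T \<ge> t0" using \<open>c > 0\<close> by (simp add: T_def)
    have "(\<lambda>t. u t + c * t) T \<le> (\<lambda>t. u t + c * t) t0"
    proof (rule DERIV_nonpos_imp_decreasing_open[OF \<open>T \<ge> t0\<close>])
      fix s assume s: "t0 < s" "s < T"
      have "(u has_real_derivative u' s) (at s)"
        using s by (intro DERIV_at_within_atLeast_imp_at[OF _ deriv]) auto
      then have "((\<lambda>t. u t + c * t) has_real_derivative u' s + c) (at s)"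
        by (auto intro!: derivative_eq_intros)
      moreover have "u' s + c \<le> 0" using decay[of s] above[of s] s by auto
      ultimately show "\<exists>y. DERIV (\<lambda>t. u t + c * t) s :> y \<and> y \<le> 0" by blast
    qed (auto intro!: continuous_intros continuous_on_if_DERIV_within_atLeast[OF deriv])
    then have "u T \<le> u t0 - (\<bar>u t0 - K\<bar> + c)"
      using \<open>c > 0\<close> by (simp add: T_def algebra_simps)
    then show False using above[OF \<open>T \<ge> t0\<close>] \<open>c > 0\<close> by linarith
  qed
  then obtain t1 where t1: "t1 \<ge> t0" "u t1 \<le> K" by blast
  have "u t \<le> max (u t1) K" if "t \<ge> t1" for t
  proof (rule le_max_if_deriv_nonpos_above[OF _ _ that])
    show "(u has_real_derivative u' s) (at s within {t1..})" if "s \<ge> t1" for s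
      using that t1 by (intro has_field_derivative_subset[OF deriv]) auto
    show "u' s \<le> 0" if "s > t1" "u s > K" for s
      using that decay[of s] \<open>c > 0\<close> t1 by auto
  qed
  then show ?thesis using t1 by (auto simp: eventually_at_top_linorder)
qed

lemma eventually_at_top_nonnegE:
  fixes P :: "real \<Rightarrow> bool"
  assumes "eventually P at_top"
  obtains T where "T \<ge> 0" "\<And>t. t \<ge> T \<Longrightarrow> P t"
  using assms unfolding eventually_at_top_linorder
  by (metis max.cobounded1 max.cobounded2 order_trans)

lemma positive_if_rate_bounded_below:
  fixes x :: "real \<Rightarrow> 'e::finite \<Rightarrow> real" and h :: "'e \<Rightarrow> real \<Rightarrow> real"
  assumes deriv: "\<And>e t. t \<ge> 0 \<Longrightarrow>
        ((\<lambda>s. x s e) has_real_derivative x t e * h e t) (at t within {0..})"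
    and bound: "\<And>e t. t > 0 \<Longrightarrow> (\<forall>e'. x t e' > 0) \<Longrightarrow> h e t \<ge> -c"
    and init: "\<And>e. x 0 e > 0"
    and "t \<ge> 0"
  shows "x t e > 0"
proof (rule ccontr)
  assume "\<not> x t e > 0"
  define Z where "Z = (\<Union>e'. {s \<in> {0..t}. x s e' \<le> 0})"
  have "closed Z" unfolding Z_def
    by (intro closed_UN finite_UNIV ballI continuous_on_closed_Collect_le
        continuous_on_if_DERIV_within_atLeast[OF deriv]) auto
  moreover have "t \<in> Z" using \<open>\<not> x t e > 0\<close> \<open>t \<ge> 0\<close> by (auto simp: Z_def not_less)
  moreover have bdd: "bdd_below Z" unfolding Z_def by (auto intro: bdd_belowI[of _ 0])
  ultimately have "Inf Z \<in> Z" using closed_contains_Inf by blast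
  define a where "a = Inf Z"
  obtain e0 where "0 \<le> a" "a \<le> t" "x a e0 \<le> 0"
    using \<open>Inf Z \<in> Z\<close> by (auto simp: Z_def a_def)
  have before: "x s e' > 0" if "0 \<le> s" "s < a" for s e'
  proof (rule ccontr)
    assume "\<not> ?thesis"
    then have "s \<in> Z" using that \<open>a \<le> t\<close> by (auto simp: Z_def not_less)
    then have "a \<le> s" using bdd unfolding a_def by (rule cInf_lower)
    then show False using that by simp
  qed
  have "a \<noteq> 0" using \<open>x a e0 \<le> 0\<close> init[of e0] by auto
  \<comment> \<open>\<open>x e0 * exp (c * s)\<close> is nondecreasing on \<open>[0, a]\<close>,
    yet it drops from positive to nonpositive.\<close>
  have "x 0 e0 * exp (c * 0) \<le> x a e0 * exp (c * a)"
  proof (rule DERIV_nonneg_imp_increasing_open[where f = "\<lambda>s. x s e0 * exp (c * s)"])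
    fix s assume s: "0 < s" "s < a"
    have "((\<lambda>s. x s e0) has_real_derivative x s e0 * h e0 s) (at s)"
      using s by (intro DERIV_at_within_atLeast_imp_at[OF _ deriv]) auto
    then have "((\<lambda>s. x s e0 * exp (c * s)) has_real_derivative
        x s e0 * exp (c * s) * (h e0 s + c)) (at s)"
      by (auto intro!: derivative_eq_intros simp: algebra_simps)
    moreover have "x s e0 * exp (c * s) * (h e0 s + c) \<ge> 0"
      using before[of s] bound[of s e0] s by (simp add: less_imp_le)
    ultimately show "\<exists>y. ((\<lambda>s. x s e0 * exp (c * s)) has_real_derivative y) (at s) \<and> 0 \<le> y"
      by blast
  qed (use \<open>0 \<le> a\<close> in \<open>auto intro!: continuous_intros
         continuous_on_if_DERIV_within_atLeast[OF deriv]\<close>)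
  moreover have "x a e0 * exp (c * a) \<le> 0" using \<open>x a e0 \<le> 0\<close> by (simp add: mult_nonpos_nonneg)
  ultimately show False using init[of e0] by simp
qed

lemma sum_weighted_le:
  fixes w g :: "'a \<Rightarrow> real"
  assumes "\<And>e. e \<in> A \<Longrightarrow> 0 \<le> w e" "\<And>e. e \<in> A \<Longrightarrow> g e \<le> B"
  shows "(\<Sum>e\<in>A. w e * g e) \<le> B * (\<Sum>e\<in>A. w e)"
proof -
  have "(\<Sum>e\<in>A. w e * g e) \<le> (\<Sum>e\<in>A. w e * B)"
    using assms by (intro sum_mono mult_left_mono) auto
  then show ?thesis by (simp add: sum_distrib_left mult.commute)
qed

lemma sum_weighted_ge:
  fixes w g :: "'a \<Rightarrow> real"
  assumes "\<And>e. e \<in> A \<Longrightarrow> 0 \<le> w e" "\<And>e. e \<in> A \<Longrightarrow> B \<le> g e"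
  shows "B * (\<Sum>e\<in>A. w e) \<le> (\<Sum>e\<in>A. w e * g e)"
  using sum_weighted_le[of A w "\<lambda>e. - g e" "- B"] assms by (simp add: sum_negf)

lemma standard_response_nonneg: "standard_response f \<Longrightarrow> y \<ge> 0 \<Longrightarrow> f y \<ge> 0"
  by (simp add: standard_response_def)

lemma standard_response_1: "standard_response f \<Longrightarrow> f 1 = 1"
  by (simp add: standard_response_def)

lemma standard_response_strict_mono:
  "standard_response f \<Longrightarrow> 0 < a \<Longrightarrow> a < b \<Longrightarrow> f a < f b"
  by (auto simp: standard_response_def strict_mono_on_def)

lemma standard_response_mono:
  "standard_response f \<Longrightarrow> 0 < a \<Longrightarrow> a \<le> b \<Longrightarrow> f a \<le> f b"
  using standard_response_strict_mono[of f a b] by (cases "a = b") auto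

lemma standard_response_isCont: "standard_response f \<Longrightarrow> y > 0 \<Longrightarrow> isCont f y"
  by (auto simp: standard_response_def intro: differentiable_imp_continuous_within)

locale parallel_edge_dynamics =
  fixes l :: "'e::finite \<Rightarrow> real"
    and f :: "'e \<Rightarrow> real \<Rightarrow> real"
    and x :: "real \<Rightarrow> 'e \<Rightarrow> real"
  assumes l_pos: "\<And>e. l e > 0"
    and f_std: "\<And>e. standard_response (f e)"
    and ode: "\<And>e t. t \<ge> 0 \<Longrightarrow>
        ((\<lambda>s. x s e) has_real_derivative
           x t e * (f e (energy l (x t) / l e) - 1)) (at t within {0..})"
    and init_pos: "\<And>e. x 0 e > 0"
begin

definition conductance :: "'e set \<Rightarrow> real \<Rightarrow> real" where
  "conductance A t = (\<Sum>e\<in>A. x t e / l e)"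

definition rate :: "'e \<Rightarrow> real \<Rightarrow> real" where
  "rate e t = f e (energy l (x t) / l e) - 1"

definition mean_rate :: "'e set \<Rightarrow> real \<Rightarrow> real" where
  "mean_rate A t = (\<Sum>e\<in>A. x t e / l e * rate e t) / conductance A t"

lemma energy_eq_inverse_conductance: "energy l (x t) = inverse (conductance UNIV t)"
  by (simp add: energy_def conductance_def)

lemma x_deriv:
  "t \<ge> 0 \<Longrightarrow> ((\<lambda>s. x s e) has_real_derivative x t e * rate e t) (at t within {0..})"
  using ode by (simp add: rate_def)

lemma x_pos:
  assumes "t \<ge> 0" shows "x t e > 0"
proof (rule positive_if_rate_bounded_below[OF x_deriv _ init_pos assms])
  fix e s assume "\<forall>e'. x s e' > 0"
  then have "conductance UNIV s > 0"
    unfolding conductance_def using l_pos by (intro sum_pos) auto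
  then have "energy l (x s) / l e \<ge> 0"
    using l_pos[of e] by (simp add: energy_eq_inverse_conductance)
  then show "rate e s \<ge> -1"
    using standard_response_nonneg[OF f_std] by (simp add: rate_def)
qed simp

lemma conductance_nonneg: "t \<ge> 0 \<Longrightarrow> conductance A t \<ge> 0"
  unfolding conductance_def using x_pos l_pos by (intro sum_nonneg) (simp add: less_imp_le)

lemma conductance_pos: "t \<ge> 0 \<Longrightarrow> A \<noteq> {} \<Longrightarrow> conductance A t > 0"
  unfolding conductance_def using x_pos l_pos by (intro sum_pos) auto

lemma energy_pos: "t \<ge> 0 \<Longrightarrow> energy l (x t) > 0"
  using conductance_pos[of t UNIV] by (simp add: energy_eq_inverse_conductance)

lemma x_div_l_le_conductance: "t \<ge> 0 \<Longrightarrow> e \<in> A \<Longrightarrow> x t e / l e \<le> conductance A t"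
  unfolding conductance_def using x_pos l_pos
  by (intro member_le_sum) (auto intro: less_imp_le)

lemma conductance_deriv:
  "t \<ge> 0 \<Longrightarrow> (conductance A has_real_derivative (\<Sum>e\<in>A. x t e / l e * rate e t))
     (at t within {0..})"
  unfolding conductance_def
  by (rule DERIV_sum, rule DERIV_cdivide[OF x_deriv, THEN DERIV_cong]) simp_all

lemma ln_conductance_deriv:
  assumes "t \<ge> 0" "A \<noteq> {}"
  shows "((\<lambda>s. ln (conductance A s)) has_real_derivative mean_rate A t) (at t within {0..})"
  using DERIV_chain2[OF DERIV_ln_divide[OF conductance_pos[OF assms]] conductance_deriv[OF assms(1)]]
  by (simp add: mean_rate_def)

lemma ln_x_deriv:
  assumes "t \<ge> 0"
  shows "((\<lambda>s. ln (x s e)) has_real_derivative rate e t) (at t within {0..})"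
  using DERIV_chain2[OF DERIV_ln_divide[OF x_pos[OF assms, of e]] x_deriv[OF assms, of e]]
    x_pos[OF assms, of e] by simp

lemma mean_rate_le:
  assumes "t \<ge> 0" "A \<noteq> {}" "\<And>e. e \<in> A \<Longrightarrow> rate e t \<le> B"
  shows "mean_rate A t \<le> B"
proof -
  have "(\<Sum>e\<in>A. x t e / l e * rate e t) \<le> B * conductance A t"
    unfolding conductance_def using assms x_pos l_pos
    by (intro sum_weighted_le) (auto intro: less_imp_le)
  then show ?thesis
    using conductance_pos[OF assms(1,2)] by (simp add: mean_rate_def divide_le_eq)
qed

lemma rate_le_if_energy_le:
  "t \<ge> 0 \<Longrightarrow> energy l (x t) \<le> \<eta> \<Longrightarrow> rate e t \<le> f e (\<eta> / l e) - 1"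
  using standard_response_mono[OF f_std, of "energy l (x t) / l e" "\<eta> / l e" e]
    energy_pos l_pos[of e] by (simp add: rate_def divide_right_mono)

lemma rate_ge_if_energy_ge:
  "\<eta> > 0 \<Longrightarrow> \<eta> \<le> energy l (x t) \<Longrightarrow> f e (\<eta> / l e) - 1 \<le> rate e t"
  using standard_response_mono[OF f_std, of "\<eta> / l e" "energy l (x t) / l e" e]
    l_pos[of e] by (simp add: rate_def divide_right_mono)

lemma x_le_max_init_1:
  assumes "t \<ge> 0" shows "x t e \<le> max (x 0 e) 1"
proof (rule le_max_if_deriv_nonpos_above[where u = "\<lambda>s. x s e", OF x_deriv _ assms])
  fix s :: real assume s: "s > 0" "x s e > 1"
  have "x s e / l e \<le> conductance UNIV s" using s by (intro x_div_l_le_conductance) auto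
  then have energy_le: "energy l (x s) \<le> inverse (x s e / l e)"
    unfolding energy_eq_inverse_conductance using s l_pos[of e]
    by (intro le_imp_inverse_le) auto
  have "inverse (x s e / l e) / l e = 1 / x s e"
    using l_pos[of e] by (simp add: field_simps)
  then have "rate e s \<le> f e (1 / x s e) - 1"
    using rate_le_if_energy_le[OF _ energy_le, of e] s by simp
  also have "\<dots> < 0"
    using standard_response_strict_mono[OF f_std, of "1 / x s e" 1 e] s
    by (simp add: standard_response_1[OF f_std])
  finally show "x s e * rate e s \<le> 0" using s by (simp add: mult_nonneg_nonpos)
qed

lemma energy_bounded: "\<exists>M. \<forall>t\<ge>0. energy l (x t) \<le> M"
proof -
  define lmax where "lmax = Max (range l)"
  have "l e \<le> lmax" for e by (simp add: lmax_def)
  then have "lmax > 0" using l_pos order.strict_trans2 by blast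
  \<comment> \<open>Once the energy exceeds every length, all edges grow, so the conductance cannot decrease.\<close>
  have neg_bound: "- conductance UNIV t \<le> max (- conductance UNIV 0) (- (1 / lmax))" if "t \<ge> 0" for t
  proof (rule le_max_if_deriv_nonpos_above[OF DERIV_minus[OF conductance_deriv] _ that])
    fix s :: real assume s: "s > 0" "- conductance UNIV s > - (1 / lmax)"
    have "lmax \<le> energy l (x s)"
      using s conductance_pos[of s UNIV] \<open>lmax > 0\<close>
      by (simp add: energy_eq_inverse_conductance field_simps)
    then have "0 \<le> rate e s" for e
      using rate_ge_if_energy_ge[OF \<open>lmax > 0\<close>, of s e] \<open>l e \<le> lmax\<close> l_pos[of e]
        standard_response_mono[OF f_std, of 1 "lmax / l e" e]
      by (simp add: standard_response_1[OF f_std])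
    then have "0 * conductance UNIV s \<le> (\<Sum>e\<in>UNIV. x s e / l e * rate e s)"
      unfolding conductance_def using x_pos[of s] l_pos s
      by (intro sum_weighted_ge) (auto intro: less_imp_le)
    then show "- (\<Sum>e\<in>UNIV. x s e / l e * rate e s) \<le> 0" by simp
  qed simp
  then have "min (conductance UNIV 0) (1 / lmax) \<le> conductance UNIV t" if "t \<ge> 0" for t
    using neg_bound[OF that] by (simp add: le_max_iff_disj min_le_iff_disj)
  moreover have "min (conductance UNIV 0) (1 / lmax) > 0"
    using conductance_pos[of 0 UNIV] \<open>lmax > 0\<close> by simp
  ultimately have "energy l (x t) \<le> inverse (min (conductance UNIV 0) (1 / lmax))"
    if "t \<ge> 0" for t
    using that by (simp add: energy_eq_inverse_conductance le_imp_inverse_le)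
  then show ?thesis by blast
qed

lemma rate_bounded_above: "\<exists>C>0. \<forall>e. \<forall>t\<ge>0. rate e t \<le> C"
proof -
  obtain M where M: "\<And>t. t \<ge> 0 \<Longrightarrow> energy l (x t) \<le> M" using energy_bounded by blast
  define C where "C = max 1 (Max (range (\<lambda>e. f e (M / l e) - 1)))"
  have "rate e t \<le> C" if "t \<ge> 0" for e t
  proof -
    have "f e (M / l e) - 1 \<le> Max (range (\<lambda>e. f e (M / l e) - 1))" by (rule Max_ge) auto
    then show ?thesis
      using rate_le_if_energy_le[OF that M[OF that], of e] unfolding C_def
      by (meson order_trans max.cobounded2)
  qed
  moreover have "C > 0" by (simp add: C_def)
  ultimately show ?thesis by blast
qed

lemma eventually_energy_ge:
  assumes "0 < \<theta>" "\<And>e. \<theta> < l e"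
  shows "eventually (\<lambda>t. \<theta> \<le> energy l (x t)) at_top"
proof -
  define c where "c = Min (range (\<lambda>e. 1 - f e (\<theta> / l e)))"
  have "f e (\<theta> / l e) < 1" for e
    using standard_response_strict_mono[OF f_std, of "\<theta> / l e" 1 e] assms l_pos[of e]
    by (simp add: standard_response_1[OF f_std])
  then have "c > 0" by (simp add: c_def)
  have "eventually (\<lambda>t. ln (conductance UNIV t) \<le> ln (1 / \<theta>)) at_top"
  proof (rule eventually_le_if_deriv_le_neg_above[OF ln_conductance_deriv \<open>c > 0\<close>])
    fix t :: real assume t: "t \<ge> 0" "ln (conductance UNIV t) > ln (1 / \<theta>)"
    then have "energy l (x t) \<le> \<theta>"
      using conductance_pos[of t UNIV] \<open>0 < \<theta>\<close>
      by (simp add: energy_eq_inverse_conductance field_simps)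
    have c_le: "c \<le> 1 - f e (\<theta> / l e)" for e unfolding c_def by (rule Min_le) auto
    have "rate e t \<le> - c" for e
      using rate_le_if_energy_le[OF t(1) \<open>energy l (x t) \<le> \<theta>\<close>, of e] c_le[of e] by linarith
    then show "mean_rate UNIV t \<le> - c" using t by (intro mean_rate_le) auto
  qed simp_all
  moreover have "eventually (\<lambda>t. t \<ge> (0::real)) at_top" by (rule eventually_ge_at_top)
  ultimately show ?thesis
  proof eventually_elim
    case (elim t)
    then show ?case using conductance_pos[of t UNIV] \<open>0 < \<theta>\<close>
      by (simp add: energy_eq_inverse_conductance field_simps)
  qed
qed

lemma eventually_rate_ge_if_shortest:
  assumes shortest: "\<And>e'. l e \<le> l e'" and "\<epsilon> > 0"
  shows "eventually (\<lambda>t. - \<epsilon> \<le> rate e t) at_top"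
proof -
  obtain \<delta> where "\<delta> > 0" and \<delta>: "\<And>z. dist z 1 < \<delta> \<Longrightarrow> dist (f e z) (f e 1) < \<epsilon>"
    using standard_response_isCont[OF f_std, of 1 e] \<open>\<epsilon> > 0\<close>
    unfolding continuous_at_eps_delta by auto
  define \<theta> where "\<theta> = l e * (1 - min (\<delta> / 2) (1 / 2))"
  have "0 < \<theta>" "\<theta> < l e" using l_pos[of e] \<open>\<delta> > 0\<close> by (auto simp: \<theta>_def min_def)
  have "dist (\<theta> / l e) 1 < \<delta>" using l_pos[of e] \<open>\<delta> > 0\<close> by (auto simp: \<theta>_def dist_real_def min_def)
  then have "\<bar>f e (\<theta> / l e) - 1\<bar> < \<epsilon>"
    using \<delta> by (simp add: standard_response_1[OF f_std] dist_real_def)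
  then have bound: "- \<epsilon> < f e (\<theta> / l e) - 1" by linarith
  have "eventually (\<lambda>t. \<theta> \<le> energy l (x t)) at_top"
    using \<open>\<theta> < l e\<close> shortest by (intro eventually_energy_ge[OF \<open>0 < \<theta>\<close>]) (rule order.strict_trans2)
  then show ?thesis
  proof (rule eventually_mono)
    fix t assume "\<theta> \<le> energy l (x t)"
    then show "- \<epsilon> \<le> rate e t" using rate_ge_if_energy_ge[OF \<open>0 < \<theta>\<close>, of t e] bound by linarith
  qed
qed

lemma conductance_split: "conductance UNIV t = x t e / l e + conductance (- {e}) t"
  unfolding conductance_def by (simp add: sum.remove[of UNIV e] Compl_eq_Diff_UNIV)

end

locale parallel_edge_dynamics_unique_shortest = parallel_edge_dynamics l f x
  for l :: "'e::finite \<Rightarrow> real" and f x +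
  fixes istar :: 'e
  assumes istar_shortest: "\<And>e. e \<noteq> istar \<Longrightarrow> l istar < l e"
begin

lemma l_istar_le: "l istar \<le> l e"
  using istar_shortest[of e] by (cases "e = istar") auto

text \<open>Above the threshold \<open>\<eta>\<close> the mean rate of the longer edges is only bounded, not negative,
  so it gets the small weight \<open>\<alpha>\<close>; the resulting deficit below \<open>\<eta>\<close> is absorbed because the rate of
  the shortest edge is eventually almost nonnegative.\<close>
lemma eventually_lyapunov_rate_ge:
  assumes "- {istar} \<noteq> {}"
  shows "\<exists>\<alpha>>0. \<exists>d>0. eventually (\<lambda>t. d \<le> rate istar t - \<alpha> * mean_rate (- {istar}) t) at_top"
proof -
  define \<eta> where "\<eta> = (l istar + Min (l ` (- {istar}))) / 2"
  have "l istar < Min (l ` (- {istar}))" using assms istar_shortest by simp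
  then have "l istar < \<eta>" by (simp add: \<eta>_def)
  have \<eta>_less: "\<eta> < l e" if "e \<noteq> istar" for e
  proof -
    have "Min (l ` (- {istar})) \<le> l e" using that by (intro Min_le) auto
    then show ?thesis using \<open>l istar < Min _\<close> by (simp add: \<eta>_def)
  qed
  define c where "c = Min ((\<lambda>e. 1 - f e (\<eta> / l e)) ` (- {istar}))"
  have "f e (\<eta> / l e) < 1" if "e \<noteq> istar" for e
    using standard_response_strict_mono[OF f_std, of "\<eta> / l e" 1 e] l_pos[of e]
      \<eta>_less[OF that] \<open>l istar < \<eta>\<close> l_pos[of istar]
    by (simp add: standard_response_1[OF f_std])
  then have "c > 0" using assms by (simp add: c_def)
  have c_le: "c \<le> 1 - f e (\<eta> / l e)" if "e \<noteq> istar" for e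
    unfolding c_def using that by (intro Min_le) auto
  define c' where "c' = f istar (\<eta> / l istar) - 1"
  have "c' > 0"
    using standard_response_strict_mono[OF f_std, of 1 "\<eta> / l istar" istar]
      \<open>l istar < \<eta>\<close> l_pos[of istar]
    by (simp add: c'_def standard_response_1[OF f_std])
  obtain C where "C > 0" and C: "\<And>e t. t \<ge> 0 \<Longrightarrow> rate e t \<le> C"
    using rate_bounded_above by blast
  define \<alpha> where "\<alpha> = c' / (2 * C)"
  have "\<alpha> > 0" using \<open>c' > 0\<close> \<open>C > 0\<close> by (simp add: \<alpha>_def)
  define d where "d = min (\<alpha> * c / 2) (c' / 2)"
  have "d > 0" using \<open>\<alpha> > 0\<close> \<open>c > 0\<close> \<open>c' > 0\<close> by (simp add: d_def)
  have "eventually (\<lambda>t. - (\<alpha> * c / 2) \<le> rate istar t) at_top"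
    using \<open>\<alpha> > 0\<close> \<open>c > 0\<close> by (intro eventually_rate_ge_if_shortest l_istar_le) simp
  moreover have "eventually (\<lambda>t. t \<ge> (0::real)) at_top" by (rule eventually_ge_at_top)
  ultimately have "eventually (\<lambda>t. d \<le> rate istar t - \<alpha> * mean_rate (- {istar}) t) at_top"
  proof eventually_elim
    case (elim t)
    show ?case
    proof (cases "energy l (x t) \<le> \<eta>")
      case True
      have "rate e t \<le> - c" if "e \<in> - {istar}" for e
        using rate_le_if_energy_le[OF \<open>t \<ge> 0\<close> True, of e] c_le[of e] that by simp
      then have "mean_rate (- {istar}) t \<le> - c" using elim assms by (intro mean_rate_le) auto
      then have "\<alpha> * c \<le> - (\<alpha> * mean_rate (- {istar}) t)"
        using mult_left_mono[of "mean_rate (- {istar}) t" "- c" \<alpha>] \<open>\<alpha> > 0\<close> by simp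
      then show ?thesis using elim by (simp add: d_def)
    next
      case False
      then have "c' \<le> rate istar t"
        unfolding c'_def using \<open>l istar < \<eta>\<close> l_pos[of istar]
        by (intro rate_ge_if_energy_ge) auto
      moreover have "mean_rate (- {istar}) t \<le> C" using elim assms C by (intro mean_rate_le) auto
      then have "\<alpha> * mean_rate (- {istar}) t \<le> c' / 2"
        using mult_left_mono[of "mean_rate (- {istar}) t" C \<alpha>] \<open>\<alpha> > 0\<close> \<open>C > 0\<close> by (simp add: \<alpha>_def)
      ultimately show ?thesis by (simp add: d_def)
    qed
  qed
  then show ?thesis using \<open>\<alpha> > 0\<close> \<open>d > 0\<close> by blast
qed

lemma conductance_others_tendsto_0: "(conductance (- {istar}) \<longlongrightarrow> 0) at_top"
proof (cases "- {istar} = {}")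
  case True
  then have "conductance (- {istar}) = (\<lambda>t. 0)" by (simp add: conductance_def fun_eq_iff)
  then show ?thesis by simp
next
  case nonempty: False
  obtain \<alpha> d where "\<alpha> > 0" "d > 0"
    and lyapunov_eventually: "eventually (\<lambda>t. d \<le> rate istar t - \<alpha> * mean_rate (- {istar}) t) at_top"
    using eventually_lyapunov_rate_ge[OF nonempty] by blast
  obtain T where "T \<ge> 0"
    and lyapunov: "\<And>t. t \<ge> T \<Longrightarrow> d \<le> rate istar t - \<alpha> * mean_rate (- {istar}) t"
    using lyapunov_eventually by (erule eventually_at_top_nonnegE)
  define Y where "Y = max (x 0 istar) 1"
  have small: "eventually (\<lambda>t. conductance (- {istar}) t < r) at_top" if "r > 0" for r
  proof -
    define V where "V t = \<alpha> * ln (conductance (- {istar}) t) - ln (x t istar)" for t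
    have "eventually (\<lambda>t. V t \<le> \<alpha> * ln r - ln Y - 1) at_top"
    proof (rule eventually_le_if_deriv_le_neg_above[OF _ \<open>d > 0\<close>])
      fix t assume "t \<ge> T"
      then have "(V has_real_derivative \<alpha> * mean_rate (- {istar}) t - rate istar t)
          (at t within {0..})"
        unfolding V_def using \<open>T \<ge> 0\<close>
        by (intro DERIV_diff DERIV_cmult ln_conductance_deriv ln_x_deriv nonempty) auto
      then show "(V has_real_derivative \<alpha> * mean_rate (- {istar}) t - rate istar t)
          (at t within {T..})"
        by (rule has_field_derivative_subset) (use \<open>T \<ge> 0\<close> in auto)
      show "\<alpha> * mean_rate (- {istar}) t - rate istar t \<le> - d"
        using lyapunov[OF \<open>t \<ge> T\<close>] by simp
    qed
    moreover have "eventually (\<lambda>t. t \<ge> (0::real)) at_top" by (rule eventually_ge_at_top)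
    ultimately show ?thesis
    proof eventually_elim
      case (elim t)
      have "ln (x t istar) \<le> ln Y"
        using x_pos[OF elim(2)] x_le_max_init_1[OF elim(2)] by (simp add: Y_def)
      then have "\<alpha> * ln (conductance (- {istar}) t) < \<alpha> * ln r"
        using elim(1) unfolding V_def by linarith
      then have "ln (conductance (- {istar}) t) < ln r" using \<open>\<alpha> > 0\<close> by simp
      then show ?case using conductance_pos[OF elim(2) nonempty] \<open>r > 0\<close> by simp
    qed
  qed
  show ?thesis
  proof (rule order_tendstoI)
    fix a :: real assume "a < 0"
    have "eventually (\<lambda>t. t \<ge> (0::real)) at_top" by (rule eventually_ge_at_top)
    then show "eventually (\<lambda>t. a < conductance (- {istar}) t) at_top"
      by (rule eventually_mono) (metis conductance_nonneg \<open>a < 0\<close> order.strict_trans2)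
  qed (rule small)
qed

lemma eventually_x_istar_ge:
  assumes "0 < \<gamma>" "\<gamma> < 1"
  shows "eventually (\<lambda>t. 1 - \<gamma> \<le> x t istar) at_top"
proof -
  define m where "m = l istar"
  have "m > 0" using l_pos by (simp add: m_def)
  have "eventually (\<lambda>t. conductance (- {istar}) t < \<gamma> / (2 * m)) at_top"
    using order_tendstoD(2)[OF conductance_others_tendsto_0, of "\<gamma> / (2 * m)"]
      \<open>0 < \<gamma>\<close> \<open>m > 0\<close> by simp
  then obtain T where "T \<ge> 0" and others_small:
      "\<And>t. t \<ge> T \<Longrightarrow> conductance (- {istar}) t < \<gamma> / (2 * m)"
    by (erule eventually_at_top_nonnegE)
  define c where "c = f istar (1 / (1 - \<gamma> / 2)) - 1"
  have "c > 0"
    using standard_response_strict_mono[OF f_std, of 1 "1 / (1 - \<gamma> / 2)" istar] assms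
    by (simp add: c_def standard_response_1[OF f_std] field_simps)
  \<comment> \<open>While \<open>x t istar < 1 - \<gamma>\<close>, the conductance is below \<open>(1 - \<gamma>/2)/m\<close>,
    so the shortest edge grows.\<close>
  have "eventually (\<lambda>t. - ln (x t istar) \<le> - ln (1 - \<gamma>)) at_top"
  proof (rule eventually_le_if_deriv_le_neg_above[OF _ \<open>c > 0\<close>])
    fix t assume "t \<ge> T"
    then show "((\<lambda>t. - ln (x t istar)) has_real_derivative - rate istar t) (at t within {T..})"
      using \<open>T \<ge> 0\<close> by (intro has_field_derivative_subset[OF DERIV_minus[OF ln_x_deriv]]) auto
    assume "- ln (x t istar) > - ln (1 - \<gamma>)"
    then have "x t istar < 1 - \<gamma>" using x_pos[of t istar] \<open>t \<ge> T\<close> \<open>T \<ge> 0\<close> assms by simp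
    then have "conductance UNIV t < (1 - \<gamma> / 2) / m"
      using conductance_split[of t istar] others_small[OF \<open>t \<ge> T\<close>] \<open>m > 0\<close>
      by (simp add: m_def field_simps)
    then have "m / (1 - \<gamma> / 2) \<le> energy l (x t)"
      using conductance_pos[of t UNIV] \<open>t \<ge> T\<close> \<open>T \<ge> 0\<close> \<open>m > 0\<close> assms
      by (simp add: energy_eq_inverse_conductance field_simps)
    then have "f istar (m / (1 - \<gamma> / 2) / l istar) - 1 \<le> rate istar t"
      using \<open>m > 0\<close> assms by (intro rate_ge_if_energy_ge) auto
    then show "- rate istar t \<le> - c" using \<open>m > 0\<close> by (simp add: c_def m_def)
  qed
  moreover have "eventually (\<lambda>t. t \<ge> (0::real)) at_top" by (rule eventually_ge_at_top)
  ultimately show ?thesis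
    by eventually_elim (use x_pos assms in \<open>auto simp: ln_le_cancel_iff\<close>)
qed

lemma energy_tendsto: "((\<lambda>t. energy l (x t)) \<longlongrightarrow> l istar) at_top"
proof (rule order_tendstoI)
  fix a assume "a < l istar"
  show "eventually (\<lambda>t. a < energy l (x t)) at_top"
  proof (cases "a \<le> 0")
    case True
    have "eventually (\<lambda>t. t \<ge> (0::real)) at_top" by (rule eventually_ge_at_top)
    then show ?thesis by (rule eventually_mono) (metis energy_pos True order.strict_trans1)
  next
    case False
    have "(a + l istar) / 2 < l e" for e
      using \<open>a < l istar\<close> l_istar_le[of e] by (simp add: field_simps)
    then have "eventually (\<lambda>t. (a + l istar) / 2 \<le> energy l (x t)) at_top"
      using False \<open>a < l istar\<close> by (intro eventually_energy_ge) auto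
    then show ?thesis by eventually_elim (use \<open>a < l istar\<close> in simp)
  qed
next
  fix b assume "l istar < b"
  define \<gamma> where "\<gamma> = (b - l istar) / (2 * b)"
  have "b > 0" using l_pos[of istar] \<open>l istar < b\<close> by simp
  have "0 < \<gamma>" "\<gamma> < 1" using \<open>l istar < b\<close> l_pos[of istar] by (auto simp: \<gamma>_def field_simps)
  have "eventually (\<lambda>t. 1 - \<gamma> \<le> x t istar) at_top"
    by (rule eventually_x_istar_ge[OF \<open>0 < \<gamma>\<close> \<open>\<gamma> < 1\<close>])
  moreover have "eventually (\<lambda>t. t \<ge> (0::real)) at_top" by (rule eventually_ge_at_top)
  ultimately show "eventually (\<lambda>t. energy l (x t) < b) at_top"
  proof eventually_elim
    case (elim t)
    have "x t istar / l istar \<le> conductance UNIV t"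
      using elim(2) by (rule x_div_l_le_conductance) simp
    then have "energy l (x t) \<le> l istar / x t istar"
      using x_pos[OF elim(2), of istar] l_pos[of istar]
      by (simp add: energy_eq_inverse_conductance le_imp_inverse_le[where a = "x t istar / l istar",
          simplified])
    also have "\<dots> \<le> l istar / (1 - \<gamma>)"
      using elim(1) \<open>\<gamma> < 1\<close> l_pos[of istar] by (intro divide_left_mono) auto
    also have "\<dots> < b"
      using \<open>l istar < b\<close> \<open>b > 0\<close> l_pos[of istar] by (simp add: \<gamma>_def field_simps)
    finally show ?case .
  qed
qed

lemma x_tendsto: "((\<lambda>t. x t e) \<longlongrightarrow> (if e = istar then 1 else 0)) at_top"
proof (cases "e = istar")
  case True
  have "x t istar = l istar * (inverse (energy l (x t)) - conductance (- {istar}) t)" for t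
    using conductance_split[of t istar] l_pos[of istar]
    by (simp add: energy_eq_inverse_conductance field_simps)
  moreover have "((\<lambda>t. l istar * (inverse (energy l (x t)) - conductance (- {istar}) t))
      \<longlongrightarrow> l istar * (inverse (l istar) - 0)) at_top"
    using l_pos[of istar]
    by (intro tendsto_intros energy_tendsto conductance_others_tendsto_0) simp
  ultimately show ?thesis using True l_pos[of istar] by simp
next
  case False
  have "((\<lambda>t. l e * conductance (- {istar}) t) \<longlongrightarrow> l e * 0) at_top"
    by (intro tendsto_intros conductance_others_tendsto_0)
  moreover have "eventually (\<lambda>t. 0 \<le> x t e \<and> x t e \<le> l e * conductance (- {istar}) t) at_top"
    using eventually_ge_at_top[of "0::real"]
  proof eventually_elim
    case (elim t)
    then show ?case using x_pos[OF elim, of e] x_div_l_le_conductance[OF elim, of e] False l_pos[of e]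
      by (simp add: field_simps)
  qed
  ultimately show ?thesis using False
    by (auto intro: tendsto_sandwich[where f = "\<lambda>_. 0"] elim: eventually_mono)
qed

end

theorem theorem2:
  fixes l :: "'e::finite \<Rightarrow> real"
    and f :: "'e \<Rightarrow> real \<Rightarrow> real"
    and x :: "real \<Rightarrow> 'e \<Rightarrow> real"
    and istar :: 'e
  assumes l_pos: "\<And>e. l e > 0"
    and l_distinct: "inj l"
    and f_std: "\<And>e. standard_response (f e)"
    and ode: "\<And>e t. t \<ge> 0 \<Longrightarrow>
        ((\<lambda>s. x s e) has_real_derivative
           x t e * (f e (energy l (x t) / l e) - 1)) (at t within {0..})"
    and init_pos: "\<And>e. x 0 e > 0"
    and istar_min: "\<And>e. l istar \<le> l e"
  shows "((\<lambda>t. energy l (x t)) \<longlongrightarrow> l istar) at_top \<and>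
         (\<forall>e. ((\<lambda>t. x t e) \<longlongrightarrow> (if e = istar then 1 else 0)) at_top)"
proof -
  have istar_shortest: "l istar < l e" if "e \<noteq> istar" for e
    using istar_min[of e] l_distinct that by (metis inj_eq order_le_less)
  interpret parallel_edge_dynamics_unique_shortest l f x istar
    by unfold_locales (fact l_pos f_std ode init_pos istar_shortest)+
  show ?thesis using energy_tendsto x_tendsto by blast
qed

end
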